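(* Let $H=F+G$ where $F$ satisfies the Lipschitz condition in (A1) and \[ G(\theta,x)=\sum_{j=1}^N\dot g_j(\theta,x)\,\mathbb{1}_{\bigcap_{i=1}^m\{x^{(i)}\in I_{i,j}(\theta)\}} \] is lower semi-continuous, with $N\ge1$, where each $\dot g_j:\mathbb{R}^d\times\mathbb{R}^m\to\mathbb{R}^d$ satisfies, for some $L_3,L_4,K_2>0$ and all $\theta,\theta',x,x'$, $|\dot g_j(\theta,x)-\dot g_j(\theta',x')|\le(1+|x|+|x'|)^\rho(L_3|\theta-\theta'|+L_4|x-x'|)$ and $|\dot g_j(\theta,x)|\le K_2$, and each interval $I_{i,j}(\theta)$ is of one of the forms $(-\infty,\bar g^{(i)}_j(\theta))$, $(\bar g^{(i)}_j(\theta),\infty)$, $(\tilde g^{(i)}_j(\theta),\hat g^{(i)}_j(\theta))$ with $\bar g^{(i)}_j,\tilde g^{(i)}_j,\hat g^{(i)}_j:\mathbb{R}^d\to\mathbb{R}$ Lipschitz continuous. Suppose $\mathbb{E}|X_0|^{\rho}<\infty$ and that for each $i=1,\dots,m$ the coordinate $X_0^{(i)}$ has a continuous and bounded density. Then there is $L>0$ such that $\mathbb{E}|H(\theta,X_0)-H(\theta',X_0)|\le L|\theta-\theta'|$ for all $\theta,\theta'\in\mathbb{R}^d$.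
   Context: $X_0$ is an $\mathbb{R}^m$-valued random variable with coordinates $X_0^{(1)},\dots,X_0^{(m)}$; $x^{(i)}$ denotes the $i$-th coordinate of $x\in\mathbb{R}^m$. The Lipschitz condition in (A1): there are $L_1,L_2>0$, $\rho\ge0$ with $|F(\theta,x)-F(\theta',x')|\le(1+|x|+|x'|)^\rho(L_1|\theta-\theta'|+L_2|x-x'|)$ for all $\theta,\theta'\in\mathbb{R}^d$, $x,x'\in\mathbb{R}^m$. *)

theory Defs
  imports "HOL-Analysis.Analysis" "HOL-Probability.Probability"
begin

definition lsc_real :: "('a::topological_space \<Rightarrow> real) \<Rightarrow> bool" where
  "lsc_real f \<longleftrightarrow> (\<forall>z. \<forall>t. t < f z \<longrightarrow> (\<forall>\<^sub>F y in nhds z. t < f y))"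

definition lsc_vec :: "('a::topological_space \<Rightarrow> real^'n) \<Rightarrow> bool" where
  "lsc_vec f \<longleftrightarrow> (\<forall>k. lsc_real (\<lambda>z. f z $ k))"

definition admissible_interval :: "(real^'d \<Rightarrow> real set) \<Rightarrow> bool" where
  "admissible_interval I \<longleftrightarrow>
     (\<exists>g C. C-lipschitz_on UNIV g \<and> I = (\<lambda>\<theta>. {..< g \<theta>})) \<or>
     (\<exists>g C. C-lipschitz_on UNIV g \<and> I = (\<lambda>\<theta>. {g \<theta> <..})) \<or>
     (\<exists>g h C D. C-lipschitz_on UNIV g \<and> D-lipschitz_on UNIV h \<and> I = (\<lambda>\<theta>. {g \<theta> <..< h \<theta>}))"

end

theory Submission
  imports Defs
begin

text \<open>Fix \<open>x\<close> and write \<open>n = |\<theta> - \<theta>'|\<close>. The Lipschitz parts of \<open>F\<close> and of the \<open>gdot j\<close>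
  change by at most \<open>(1 + 2|x|) powr \<rho> * (L1 + N * L3) * n\<close>, which has finite mean by the
  moment assumption. An indicator of \<open>G\<close> switches only if some coordinate \<open>x $ i\<close> lies in
  the symmetric difference of \<open>I i j \<theta>\<close> and \<open>I i j \<theta>'\<close>, and then costs at most \<open>K2\<close>.
  Because the endpoints are Lipschitz, that symmetric difference is covered by two intervals
  of total length \<open>O(n)\<close>, so a bounded density gives it probability \<open>O(n)\<close>.\<close>

lemma ennreal_add_le: "ennreal (a + b) \<le> ennreal a + ennreal b"
  by (smt (verit) add_increasing add_increasing2 ennreal_le_iff ennreal_neg ennreal_plus ennreal_leI zero_le)

lemma powr_one_plus_twice_le:
  fixes t \<rho> :: real
  assumes "0 \<le> t" "0 \<le> \<rho>"
  shows "(1 + 2 * t) powr \<rho> \<le> 3 powr \<rho> * (1 + t powr \<rho>)"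
proof -
  have "(1 + 2 * t) powr \<rho> \<le> (3 * max 1 t) powr \<rho>"
    using assms by (intro powr_mono2) auto
  also have "\<dots> = 3 powr \<rho> * max 1 t powr \<rho>"
    using assms by (simp add: powr_mult)
  also have "\<dots> \<le> 3 powr \<rho> * (1 + t powr \<rho>)"
    by (intro mult_left_mono) (auto simp: max_def)
  finally show ?thesis .
qed

lemma integrable_powr_one_plus_twice:
  fixes f :: "'w \<Rightarrow> real"
  assumes "finite_measure M" "f \<in> borel_measurable M" "\<And>\<omega>. 0 \<le> f \<omega>" "0 \<le> \<rho>"
    and "integrable M (\<lambda>\<omega>. f \<omega> powr \<rho>)"
  shows "integrable M (\<lambda>\<omega>. (1 + 2 * f \<omega>) powr \<rho>)"
proof (rule Bochner_Integration.integrable_bound)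
  interpret finite_measure M by (rule assms(1))
  show "integrable M (\<lambda>\<omega>. 3 powr \<rho> * (1 + f \<omega> powr \<rho>))"
    using assms(5) by auto
  show "AE \<omega> in M. norm ((1 + 2 * f \<omega>) powr \<rho>) \<le> norm (3 powr \<rho> * (1 + f \<omega> powr \<rho>))"
    using powr_one_plus_twice_le[OF assms(3,4)] by simp
qed (use assms(2) in measurable)

subsection \<open>Symmetric differences of admissible intervals\<close>

lemma emeasure_lborel_le_between:
  fixes a b :: real
  assumes "S \<subseteq> {min a b..max a b}"
  shows "emeasure lborel S \<le> ennreal \<bar>a - b\<bar>"
proof -
  have "emeasure lborel S \<le> emeasure lborel {min a b..max a b}"
    using assms by (intro emeasure_mono) auto
  also have "\<dots> = ennreal \<bar>a - b\<bar>"
    by simp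
  finally show ?thesis .
qed

lemma admissible_interval_open: "admissible_interval I \<Longrightarrow> open (I \<theta>)"
  unfolding admissible_interval_def by auto

lemma admissible_interval_symdiff_le:
  fixes I :: "real^'d \<Rightarrow> real set"
  assumes "admissible_interval I"
  shows "\<exists>C\<ge>0. \<forall>\<theta> \<theta>'. emeasure lborel (sym_diff (I \<theta>) (I \<theta>')) \<le> ennreal (C * dist \<theta> \<theta>')"
  using assms unfolding admissible_interval_def
proof (elim disjE exE conjE)
  fix g C assume g: "C-lipschitz_on UNIV g" and I: "I = (\<lambda>\<theta>. {..< g \<theta>})"
  have "emeasure lborel (sym_diff (I \<theta>) (I \<theta>')) \<le> ennreal (C * dist \<theta> \<theta>')" for \<theta> \<theta>'
    using lipschitz_onD[OF g, of \<theta> \<theta>']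
    by (intro order_trans[OF emeasure_lborel_le_between[of _ "g \<theta>" "g \<theta>'"]])
       (auto simp: I dist_real_def intro: ennreal_leI)
  then show ?thesis using lipschitz_on_nonneg[OF g] by blast
next
  fix g C assume g: "C-lipschitz_on UNIV g" and I: "I = (\<lambda>\<theta>. {g \<theta> <..})"
  have "emeasure lborel (sym_diff (I \<theta>) (I \<theta>')) \<le> ennreal (C * dist \<theta> \<theta>')" for \<theta> \<theta>'
    using lipschitz_onD[OF g, of \<theta> \<theta>']
    by (intro order_trans[OF emeasure_lborel_le_between[of _ "g \<theta>" "g \<theta>'"]])
       (auto simp: I dist_real_def intro: ennreal_leI)
  then show ?thesis using lipschitz_on_nonneg[OF g] by blast
next
  fix g h C D assume g: "C-lipschitz_on UNIV g" and h: "D-lipschitz_on UNIV h"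
    and I: "I = (\<lambda>\<theta>. {g \<theta> <..< h \<theta>})"
  have "emeasure lborel (sym_diff (I \<theta>) (I \<theta>')) \<le> ennreal ((C + D) * dist \<theta> \<theta>')" for \<theta> \<theta>'
  proof -
    let ?Sg = "{min (g \<theta>) (g \<theta>')..max (g \<theta>) (g \<theta>')}" and ?Sh = "{min (h \<theta>) (h \<theta>')..max (h \<theta>) (h \<theta>')}"
    have "emeasure lborel (sym_diff (I \<theta>) (I \<theta>')) \<le> emeasure lborel (?Sg \<union> ?Sh)"
      by (intro emeasure_mono) (auto simp: I)
    also have "\<dots> \<le> emeasure lborel ?Sg + emeasure lborel ?Sh"
      by (intro emeasure_subadditive) auto
    also have "\<dots> \<le> ennreal \<bar>g \<theta> - g \<theta>'\<bar> + ennreal \<bar>h \<theta> - h \<theta>'\<bar>"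
      by (intro add_mono emeasure_lborel_le_between) auto
    also have "\<dots> = ennreal (\<bar>g \<theta> - g \<theta>'\<bar> + \<bar>h \<theta> - h \<theta>'\<bar>)"
      by (simp add: ennreal_plus)
    also have "\<dots> \<le> ennreal ((C + D) * dist \<theta> \<theta>')"
      using lipschitz_onD[OF g, of \<theta> \<theta>'] lipschitz_onD[OF h, of \<theta> \<theta>']
      by (intro ennreal_leI) (simp add: dist_real_def distrib_right)
    finally show ?thesis .
  qed
  then show ?thesis using lipschitz_on_nonneg[OF g] lipschitz_on_nonneg[OF h] by (meson add_nonneg_nonneg)
qed

lemma emeasure_distributed_le_density_bound:
  fixes f :: "real \<Rightarrow> real"
  assumes "distributed M lborel Y (\<lambda>t. ennreal (f t))" "\<And>t. f t \<le> B" "A \<in> sets borel"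
  shows "emeasure M (Y -` A \<inter> space M) \<le> ennreal B * emeasure lborel A"
proof -
  have "emeasure M (Y -` A \<inter> space M) = (\<integral>\<^sup>+t. ennreal (f t) * indicator A t \<partial>lborel)"
    using assms(1,3) by (intro distributed_emeasure) auto
  also have "\<dots> \<le> (\<integral>\<^sup>+t. ennreal B * indicator A t \<partial>lborel)"
    using assms(2) by (intro nn_integral_mono mult_right_mono ennreal_leI) auto
  also have "\<dots> = ennreal B * emeasure lborel A"
    using assms(3) by (simp add: nn_integral_cmult_indicator)
  finally show ?thesis .
qed

subsection \<open>Lipschitz continuity in mean\<close>

definition lipschitz_in_mean :: "'w measure \<Rightarrow> ('p::metric_space \<Rightarrow> 'p \<Rightarrow> 'w \<Rightarrow> real) \<Rightarrow> bool" where
  "lipschitz_in_mean M D \<longleftrightarrow>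
     (\<exists>L\<ge>0. \<forall>\<theta> \<theta>'. (\<integral>\<^sup>+\<omega>. ennreal (D \<theta> \<theta>' \<omega>) \<partial>M) \<le> ennreal (L * dist \<theta> \<theta>'))"

lemma lipschitz_in_mean_mono:
  assumes "lipschitz_in_mean M E" "\<And>\<theta> \<theta>' \<omega>. \<omega> \<in> space M \<Longrightarrow> D \<theta> \<theta>' \<omega> \<le> E \<theta> \<theta>' \<omega>"
  shows "lipschitz_in_mean M D"
proof -
  obtain L where "L \<ge> 0" and L: "\<And>\<theta> \<theta>'. (\<integral>\<^sup>+\<omega>. ennreal (E \<theta> \<theta>' \<omega>) \<partial>M) \<le> ennreal (L * dist \<theta> \<theta>')"
    using assms(1) unfolding lipschitz_in_mean_def by blast
  have "(\<integral>\<^sup>+\<omega>. ennreal (D \<theta> \<theta>' \<omega>) \<partial>M) \<le> ennreal (L * dist \<theta> \<theta>')" for \<theta> \<theta>'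
    using assms(2) by (intro order_trans[OF nn_integral_mono L] ennreal_leI)
  with \<open>L \<ge> 0\<close> show ?thesis unfolding lipschitz_in_mean_def by blast
qed

lemma lipschitz_in_mean_add:
  assumes "lipschitz_in_mean M D" "lipschitz_in_mean M E"
    and "\<And>\<theta> \<theta>'. D \<theta> \<theta>' \<in> borel_measurable M" "\<And>\<theta> \<theta>'. E \<theta> \<theta>' \<in> borel_measurable M"
  shows "lipschitz_in_mean M (\<lambda>\<theta> \<theta>' \<omega>. D \<theta> \<theta>' \<omega> + E \<theta> \<theta>' \<omega>)"
proof -
  obtain K L where "K \<ge> 0" "L \<ge> 0"
    and K: "\<And>\<theta> \<theta>'. (\<integral>\<^sup>+\<omega>. ennreal (D \<theta> \<theta>' \<omega>) \<partial>M) \<le> ennreal (K * dist \<theta> \<theta>')"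
    and L: "\<And>\<theta> \<theta>'. (\<integral>\<^sup>+\<omega>. ennreal (E \<theta> \<theta>' \<omega>) \<partial>M) \<le> ennreal (L * dist \<theta> \<theta>')"
    using assms(1,2) unfolding lipschitz_in_mean_def by metis
  have "(\<integral>\<^sup>+\<omega>. ennreal (D \<theta> \<theta>' \<omega> + E \<theta> \<theta>' \<omega>) \<partial>M) \<le> ennreal ((K + L) * dist \<theta> \<theta>')" for \<theta> \<theta>'
  proof -
    have "(\<integral>\<^sup>+\<omega>. ennreal (D \<theta> \<theta>' \<omega> + E \<theta> \<theta>' \<omega>) \<partial>M)
        \<le> (\<integral>\<^sup>+\<omega>. ennreal (D \<theta> \<theta>' \<omega>) + ennreal (E \<theta> \<theta>' \<omega>) \<partial>M)"
      by (intro nn_integral_mono ennreal_add_le)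
    also have "\<dots> = (\<integral>\<^sup>+\<omega>. ennreal (D \<theta> \<theta>' \<omega>) \<partial>M) + (\<integral>\<^sup>+\<omega>. ennreal (E \<theta> \<theta>' \<omega>) \<partial>M)"
      using assms(3,4) by (intro nn_integral_add) auto
    also have "\<dots> \<le> ennreal (K * dist \<theta> \<theta>') + ennreal (L * dist \<theta> \<theta>')"
      by (intro add_mono K L)
    also have "\<dots> = ennreal ((K + L) * dist \<theta> \<theta>')"
      using \<open>K \<ge> 0\<close> \<open>L \<ge> 0\<close> by (simp add: ennreal_plus[symmetric] distrib_right del: ennreal_plus)
    finally show ?thesis .
  qed
  with \<open>K \<ge> 0\<close> \<open>L \<ge> 0\<close> show ?thesis unfolding lipschitz_in_mean_def
    by (meson add_nonneg_nonneg)
qed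

lemma lipschitz_in_mean_sum:
  assumes "finite J" "\<And>j. j \<in> J \<Longrightarrow> lipschitz_in_mean M (D j)"
    and "\<And>j \<theta> \<theta>'. j \<in> J \<Longrightarrow> D j \<theta> \<theta>' \<in> borel_measurable M"
  shows "lipschitz_in_mean M (\<lambda>\<theta> \<theta>' \<omega>. \<Sum>j\<in>J. D j \<theta> \<theta>' \<omega>)"
  using assms
proof (induction J rule: finite_induct)
  case empty
  show ?case unfolding lipschitz_in_mean_def by (intro exI[of _ 0]) simp
next
  case (insert j J)
  have "lipschitz_in_mean M (\<lambda>\<theta> \<theta>' \<omega>. D j \<theta> \<theta>' \<omega> + (\<Sum>j\<in>J. D j \<theta> \<theta>' \<omega>))"
    using insert by (intro lipschitz_in_mean_add borel_measurable_sum) auto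
  with insert(1,2) show ?case by simp
qed

lemma lipschitz_in_mean_cmult:
  assumes "lipschitz_in_mean M D" "0 \<le> c" "\<And>\<theta> \<theta>'. D \<theta> \<theta>' \<in> borel_measurable M"
  shows "lipschitz_in_mean M (\<lambda>\<theta> \<theta>' \<omega>. c * D \<theta> \<theta>' \<omega>)"
proof -
  obtain L where "L \<ge> 0" and L: "\<And>\<theta> \<theta>'. (\<integral>\<^sup>+\<omega>. ennreal (D \<theta> \<theta>' \<omega>) \<partial>M) \<le> ennreal (L * dist \<theta> \<theta>')"
    using assms(1) unfolding lipschitz_in_mean_def by blast
  have "(\<integral>\<^sup>+\<omega>. ennreal (c * D \<theta> \<theta>' \<omega>) \<partial>M) \<le> ennreal (c * L * dist \<theta> \<theta>')" for \<theta> \<theta>'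
  proof -
    have "(\<integral>\<^sup>+\<omega>. ennreal (c * D \<theta> \<theta>' \<omega>) \<partial>M) = ennreal c * (\<integral>\<^sup>+\<omega>. ennreal (D \<theta> \<theta>' \<omega>) \<partial>M)"
      using assms(2,3) by (simp add: ennreal_mult' nn_integral_cmult)
    also have "\<dots> \<le> ennreal c * ennreal (L * dist \<theta> \<theta>')"
      by (intro mult_left_mono L) simp
    finally show ?thesis
      using assms(2) by (simp add: ennreal_mult' mult.assoc)
  qed
  with \<open>L \<ge> 0\<close> assms(2) show ?thesis unfolding lipschitz_in_mean_def
    by (meson mult_nonneg_nonneg)
qed

lemma lipschitz_in_mean_weight:
  assumes "integrable M w" "\<And>\<omega>. 0 \<le> w \<omega>"
  shows "lipschitz_in_mean M (\<lambda>\<theta> \<theta>' \<omega>. w \<omega> * dist \<theta> \<theta>')"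
proof -
  have "(\<integral>\<^sup>+\<omega>. ennreal (w \<omega> * dist \<theta> \<theta>') \<partial>M) = ennreal ((\<integral>\<omega>. w \<omega> \<partial>M) * dist \<theta> \<theta>')" for \<theta> \<theta>'
  proof -
    have "(\<integral>\<^sup>+\<omega>. ennreal (w \<omega> * dist \<theta> \<theta>') \<partial>M) = (\<integral>\<^sup>+\<omega>. ennreal (w \<omega>) \<partial>M) * ennreal (dist \<theta> \<theta>')"
      using assms(1) by (simp add: ennreal_mult'' nn_integral_multc)
    also have "\<dots> = ennreal (\<integral>\<omega>. w \<omega> \<partial>M) * ennreal (dist \<theta> \<theta>')"
      using assms by (simp add: nn_integral_eq_integral)
    finally show ?thesis by (simp add: ennreal_mult'')
  qed
  moreover have "0 \<le> (\<integral>\<omega>. w \<omega> \<partial>M)"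
    using assms(2) by simp
  ultimately show ?thesis unfolding lipschitz_in_mean_def by (metis order_refl)
qed

definition crossing :: "'w measure \<Rightarrow> ('w \<Rightarrow> real) \<Rightarrow> ('p \<Rightarrow> real set) \<Rightarrow> 'p \<Rightarrow> 'p \<Rightarrow> 'w set" where
  "crossing M Y I \<theta> \<theta>' = {\<omega>\<in>space M. (Y \<omega> \<in> I \<theta>) \<noteq> (Y \<omega> \<in> I \<theta>')}"

lemma sets_crossing:
  assumes "Y \<in> borel_measurable M" "admissible_interval I"
  shows "crossing M Y I \<theta> \<theta>' \<in> sets M"
proof -
  have "I \<theta> \<in> sets borel" "I \<theta>' \<in> sets borel"
    using admissible_interval_open[OF assms(2)] by auto
  with assms(1) show ?thesis unfolding crossing_def by measurable
qed

lemma lipschitz_in_mean_indicator_crossing: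
  fixes f :: "real \<Rightarrow> real" and I :: "real^'d \<Rightarrow> real set"
  assumes Y: "distributed M lborel Y (\<lambda>t. ennreal (f t))" and f: "bounded (range f)"
    and I: "admissible_interval I"
  shows "lipschitz_in_mean M (\<lambda>\<theta> \<theta>'. indicator (crossing M Y I \<theta> \<theta>'))"
proof -
  obtain B where B: "\<And>t. \<bar>f t\<bar> \<le> B"
    using f unfolding bounded_iff by auto
  then have fB: "\<And>t. f t \<le> B" and "0 \<le> B"
    using abs_le_D1 abs_ge_zero order_trans by blast+
  obtain C where "C \<ge> 0"
    and C: "\<And>\<theta> \<theta>'. emeasure lborel (sym_diff (I \<theta>) (I \<theta>')) \<le> ennreal (C * dist \<theta> \<theta>')"
    using admissible_interval_symdiff_le[OF I] by blast
  have "(\<integral>\<^sup>+\<omega>. ennreal (indicator (crossing M Y I \<theta> \<theta>') \<omega>) \<partial>M) \<le> ennreal (B * C * dist \<theta> \<theta>')" for \<theta> \<theta>'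
  proof -
    let ?S = "sym_diff (I \<theta>) (I \<theta>')"
    have "crossing M Y I \<theta> \<theta>' \<in> sets M"
      using distributed_measurable[OF Y] I by (intro sets_crossing) simp_all
    then have "(\<integral>\<^sup>+\<omega>. ennreal (indicator (crossing M Y I \<theta> \<theta>') \<omega>) \<partial>M) = emeasure M (crossing M Y I \<theta> \<theta>')"
      by (simp add: ennreal_indicator nn_integral_indicator)
    also have "\<dots> = emeasure M (Y -` ?S \<inter> space M)"
      unfolding crossing_def by (intro arg_cong[where f = "emeasure M"]) auto
    also have "\<dots> \<le> ennreal B * emeasure lborel ?S"
      using admissible_interval_open[OF I]
      by (intro emeasure_distributed_le_density_bound[OF Y fB]) auto
    also have "\<dots> \<le> ennreal B * ennreal (C * dist \<theta> \<theta>')"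
      by (intro mult_left_mono C) simp
    finally show ?thesis
      using \<open>0 \<le> B\<close> by (simp add: ennreal_mult' mult.assoc)
  qed
  with \<open>0 \<le> B\<close> \<open>0 \<le> C\<close> show ?thesis unfolding lipschitz_in_mean_def
    by (meson mult_nonneg_nonneg)
qed


lemma lipschitz_in_mean_crossing_sum:
  fixes Y :: "'i::finite \<Rightarrow> 'w \<Rightarrow> real" and I :: "'i \<Rightarrow> 'j \<Rightarrow> real^'d \<Rightarrow> real set"
  assumes "finite J" "0 \<le> K" "\<And>i j. j \<in> J \<Longrightarrow> admissible_interval (I i j)"
    and "\<And>i. \<exists>f. bounded (range f) \<and> distributed M lborel (Y i) (\<lambda>t. ennreal (f t))"
  shows "lipschitz_in_mean M (\<lambda>\<theta> \<theta>' \<omega>. \<Sum>j\<in>J. \<Sum>i\<in>UNIV. K * indicator (crossing M (Y i) (I i j) \<theta> \<theta>') \<omega>)"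
    and "(\<lambda>\<omega>. \<Sum>j\<in>J. \<Sum>i\<in>UNIV. K * indicator (crossing M (Y i) (I i j) \<theta> \<theta>') \<omega>) \<in> borel_measurable M"
proof -
  have crossing_sets: "crossing M (Y i) (I i j) \<theta> \<theta>' \<in> sets M"
    and crossing_lipschitz: "lipschitz_in_mean M (\<lambda>\<theta> \<theta>'. indicator (crossing M (Y i) (I i j) \<theta> \<theta>'))"
    if "j \<in> J" for i j \<theta> \<theta>'
  proof -
    obtain f where f: "bounded (range f)" and Y: "distributed M lborel (Y i) (\<lambda>t. ennreal (f t))"
      using assms(4)[of i] by blast
    from distributed_measurable[OF Y] assms(3)[OF that] show "crossing M (Y i) (I i j) \<theta> \<theta>' \<in> sets M"
      by (intro sets_crossing) simp_all
    from Y f assms(3)[OF that] show "lipschitz_in_mean M (\<lambda>\<theta> \<theta>'. indicator (crossing M (Y i) (I i j) \<theta> \<theta>'))"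
      by (rule lipschitz_in_mean_indicator_crossing)
  qed
  with crossing_lipschitz assms(1,2)
  show "lipschitz_in_mean M (\<lambda>\<theta> \<theta>' \<omega>. \<Sum>j\<in>J. \<Sum>i\<in>UNIV. K * indicator (crossing M (Y i) (I i j) \<theta> \<theta>') \<omega>)"
    by (intro lipschitz_in_mean_sum lipschitz_in_mean_cmult borel_measurable_sum) auto
  show "(\<lambda>\<omega>. \<Sum>j\<in>J. \<Sum>i\<in>UNIV. K * indicator (crossing M (Y i) (I i j) \<theta> \<theta>') \<omega>) \<in> borel_measurable M"
    using crossing_sets
    by (intro borel_measurable_sum borel_measurable_times borel_measurable_const borel_measurable_indicator) auto
qed

lemma lipschitz_in_mean_imp_norm_bound:
  fixes D :: "'p::real_normed_vector \<Rightarrow> 'p \<Rightarrow> 'w \<Rightarrow> real"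
  assumes "lipschitz_in_mean M D"
  shows "\<exists>L>0. \<forall>\<theta> \<theta>'. (\<integral>\<^sup>+\<omega>. ennreal (D \<theta> \<theta>' \<omega>) \<partial>M) \<le> ennreal (L * norm (\<theta> - \<theta>'))"
proof -
  obtain L where "L \<ge> 0" and L: "\<And>\<theta> \<theta>'. (\<integral>\<^sup>+\<omega>. ennreal (D \<theta> \<theta>' \<omega>) \<partial>M) \<le> ennreal (L * dist \<theta> \<theta>')"
    using assms unfolding lipschitz_in_mean_def by blast
  have "ennreal (L * dist \<theta> \<theta>') \<le> ennreal ((L + 1) * norm (\<theta> - \<theta>'))" for \<theta> \<theta>' :: 'p
    unfolding dist_norm by (intro ennreal_leI mult_right_mono) auto
  with L have "\<forall>\<theta> \<theta>'. (\<integral>\<^sup>+\<omega>. ennreal (D \<theta> \<theta>' \<omega>) \<partial>M) \<le> ennreal ((L + 1) * norm (\<theta> - \<theta>'))"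
    using order_trans by blast
  moreover have "0 < L + 1"
    using \<open>L \<ge> 0\<close> by simp
  ultimately show ?thesis by blast
qed

lemma of_bool_all_neq_le_sum:
  fixes P Q :: "'i::finite \<Rightarrow> bool"
  shows "of_bool ((\<forall>i. P i) \<noteq> (\<forall>i. Q i)) \<le> (\<Sum>i\<in>UNIV. of_bool (P i \<noteq> Q i) :: real)"
proof (cases "(\<forall>i. P i) = (\<forall>i. Q i)")
  case False
  then obtain i where "P i \<noteq> Q i" by blast
  then have "of_bool (P i \<noteq> Q i) \<le> (\<Sum>i\<in>UNIV. of_bool (P i \<noteq> Q i) :: real)"
    by (intro member_le_sum) auto
  with False \<open>P i \<noteq> Q i\<close> show ?thesis by simp
qed (simp add: sum_nonneg)

lemma norm_if_diff_le:
  fixes u v :: "'a::real_normed_vector"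
  assumes "norm u \<le> K" "norm v \<le> K"
  shows "norm ((if A then u else 0) - (if A' then v else 0)) \<le> norm (u - v) + K * of_bool (A \<noteq> A')"
  using assms by (cases A; cases A') (auto intro: add_increasing[OF norm_ge_zero])

lemma norm_diff_switched_sum_le:
  fixes u v :: "'j \<Rightarrow> 'a::real_normed_vector" and A A' :: "'j \<Rightarrow> 'i::finite \<Rightarrow> bool"
  assumes "\<And>j. j \<in> J \<Longrightarrow> norm (u j) \<le> K" "\<And>j. j \<in> J \<Longrightarrow> norm (v j) \<le> K"
  shows "norm ((\<Sum>j\<in>J. if \<forall>i. A j i then u j else 0) - (\<Sum>j\<in>J. if \<forall>i. A' j i then v j else 0))
    \<le> (\<Sum>j\<in>J. norm (u j - v j) + K * (\<Sum>i\<in>UNIV. of_bool (A j i \<noteq> A' j i)))"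
proof -
  have "norm ((\<Sum>j\<in>J. if \<forall>i. A j i then u j else 0) - (\<Sum>j\<in>J. if \<forall>i. A' j i then v j else 0))
      \<le> (\<Sum>j\<in>J. norm ((if \<forall>i. A j i then u j else 0) - (if \<forall>i. A' j i then v j else 0)))"
    unfolding sum_subtractf[symmetric] by (rule norm_sum)
  also have "\<dots> \<le> (\<Sum>j\<in>J. norm (u j - v j) + K * (\<Sum>i\<in>UNIV. of_bool (A j i \<noteq> A' j i)))"
  proof (rule sum_mono)
    fix j assume j: "j \<in> J"
    have "0 \<le> K"
      using assms(1)[OF j] norm_ge_zero order_trans by blast
    then show "norm ((if \<forall>i. A j i then u j else 0) - (if \<forall>i. A' j i then v j else 0))
        \<le> norm (u j - v j) + K * (\<Sum>i\<in>UNIV. of_bool (A j i \<noteq> A' j i))"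
      using norm_if_diff_le[OF assms(1,2)[OF j], of "\<forall>i. A j i" "\<forall>i. A' j i"]
        mult_left_mono[OF of_bool_all_neq_le_sum, of K "A j" "A' j"]
      by linarith
  qed
  finally show ?thesis .
qed

lemma norm_diff_add_switched_sum_le:
  fixes F :: "'p::metric_space \<Rightarrow> 'a::real_normed_vector" and g :: "'j \<Rightarrow> 'p \<Rightarrow> 'a"
    and A :: "'j \<Rightarrow> 'i::finite \<Rightarrow> 'p \<Rightarrow> bool"
  assumes "norm (F \<theta> - F \<theta>') \<le> a * dist \<theta> \<theta>'"
    and "\<And>j. j \<in> J \<Longrightarrow> norm (g j \<theta> - g j \<theta>') \<le> b * dist \<theta> \<theta>'"
    and "\<And>j. j \<in> J \<Longrightarrow> norm (g j \<theta>) \<le> K" "\<And>j. j \<in> J \<Longrightarrow> norm (g j \<theta>') \<le> K"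
  shows "norm ((F \<theta> + (\<Sum>j\<in>J. if \<forall>i. A j i \<theta> then g j \<theta> else 0))
      - (F \<theta>' + (\<Sum>j\<in>J. if \<forall>i. A j i \<theta>' then g j \<theta>' else 0)))
    \<le> (a + real (card J) * b) * dist \<theta> \<theta>' + (\<Sum>j\<in>J. \<Sum>i\<in>UNIV. K * of_bool (A j i \<theta> \<noteq> A j i \<theta>'))"
proof -
  let ?G = "\<lambda>\<theta>. \<Sum>j\<in>J. if \<forall>i. A j i \<theta> then g j \<theta> else 0"
  let ?S = "\<lambda>j. \<Sum>i\<in>UNIV. of_bool (A j i \<theta> \<noteq> A j i \<theta>') :: real"
  have "(F \<theta> + ?G \<theta>) - (F \<theta>' + ?G \<theta>') = (F \<theta> - F \<theta>') + (?G \<theta> - ?G \<theta>')"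
    by (simp add: algebra_simps)
  then have "norm ((F \<theta> + ?G \<theta>) - (F \<theta>' + ?G \<theta>')) \<le> norm (F \<theta> - F \<theta>') + norm (?G \<theta> - ?G \<theta>')"
    by (simp only: norm_triangle_ineq)
  also have "norm (?G \<theta> - ?G \<theta>') \<le> (\<Sum>j\<in>J. norm (g j \<theta> - g j \<theta>') + K * ?S j)"
    using assms(3,4)
    by (rule norm_diff_switched_sum_le[where A = "\<lambda>j i. A j i \<theta>" and A' = "\<lambda>j i. A j i \<theta>'"])
  also have "\<dots> \<le> (\<Sum>j\<in>J. b * dist \<theta> \<theta>' + K * ?S j)"
    using assms(2) by (intro sum_mono add_right_mono)
  also have "\<dots> = real (card J) * b * dist \<theta> \<theta>' + (\<Sum>j\<in>J. \<Sum>i\<in>UNIV. K * of_bool (A j i \<theta> \<noteq> A j i \<theta>'))"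
    by (simp add: sum.distrib sum_distrib_left mult.commute)
  finally show ?thesis
    using assms(1) by (simp add: distrib_right)
qed

theorem mainTheorem7:
  fixes F :: "real^'d \<Rightarrow> real^'m \<Rightarrow> real^'d"
    and gdot :: "nat \<Rightarrow> real^'d \<Rightarrow> real^'m \<Rightarrow> real^'d"
    and I :: "'m \<Rightarrow> nat \<Rightarrow> real^'d \<Rightarrow> real set"
    and G H :: "real^'d \<Rightarrow> real^'m \<Rightarrow> real^'d"
    and N :: nat
    and L1 L2 L3 L4 K2 \<rho> :: real
    and M :: "'w measure" and X0 :: "'w \<Rightarrow> real^'m"
  assumes rho: "\<rho> \<ge> 0" and L1: "L1 > 0" and L2: "L2 > 0"
    and F_lip: "\<And>\<theta> \<theta>' x x'. norm (F \<theta> x - F \<theta>' x')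
        \<le> (1 + norm x + norm x') powr \<rho> * (L1 * norm (\<theta> - \<theta>') + L2 * norm (x - x'))"
    and N: "N \<ge> 1"
    and L3: "L3 > 0" and L4: "L4 > 0" and K2: "K2 > 0"
    and g_lip: "\<And>j \<theta> \<theta>' x x'. j \<in> {1..N} \<Longrightarrow> norm (gdot j \<theta> x - gdot j \<theta>' x')
        \<le> (1 + norm x + norm x') powr \<rho> * (L3 * norm (\<theta> - \<theta>') + L4 * norm (x - x'))"
    and g_bdd: "\<And>j \<theta> x. j \<in> {1..N} \<Longrightarrow> norm (gdot j \<theta> x) \<le> K2"
    and I_adm: "\<And>i j. j \<in> {1..N} \<Longrightarrow> admissible_interval (I i j)"
    and G_def: "\<And>\<theta> x. G \<theta> x = (\<Sum>j\<in>{1..N}. (if (\<forall>i. x $ i \<in> I i j \<theta>) then gdot j \<theta> x else 0))"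
    and G_lsc: "lsc_vec (\<lambda>(\<theta>, x). G \<theta> x)"
    and H_def: "\<And>\<theta> x. H \<theta> x = F \<theta> x + G \<theta> x"
    and M: "prob_space M"
    and X0_meas: "X0 \<in> borel_measurable M"
    and moment: "integrable M (\<lambda>\<omega>. norm (X0 \<omega>) powr \<rho>)"
    and density: "\<And>i. \<exists>f :: real \<Rightarrow> real. (\<forall>t. f t \<ge> 0) \<and> continuous_on UNIV f \<and>
        bounded (range f) \<and> distributed M lborel (\<lambda>\<omega>. X0 \<omega> $ i) (\<lambda>t. ennreal (f t))"
  shows "\<exists>L > 0. \<forall>\<theta> \<theta>'. (\<integral>\<^sup>+ \<omega>. ennreal (norm (H \<theta> (X0 \<omega>) - H \<theta>' (X0 \<omega>))) \<partial>M)
            \<le> ennreal (L * norm (\<theta> - \<theta>'))"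
proof -
  interpret prob_space M by (rule M)
  define p where "p \<omega> = (1 + 2 * norm (X0 \<omega>)) powr \<rho>" for \<omega>
  define cross where "cross i j = crossing M (\<lambda>\<omega>. X0 \<omega> $ i) (I i j)" for i j
  have pointwise: "norm (H \<theta> (X0 \<omega>) - H \<theta>' (X0 \<omega>))
      \<le> (L1 + real N * L3) * p \<omega> * dist \<theta> \<theta>' + (\<Sum>j\<in>{1..N}. \<Sum>i\<in>UNIV. K2 * indicator (cross i j \<theta> \<theta>') \<omega>)"
    if "\<omega> \<in> space M" for \<theta> \<theta>' \<omega>
  proof -
    let ?x = "X0 \<omega>"
    have "norm (H \<theta> ?x - H \<theta>' ?x) \<le> (p \<omega> * L1 + real (card {1..N}) * (p \<omega> * L3)) * dist \<theta> \<theta>'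
        + (\<Sum>j\<in>{1..N}. \<Sum>i\<in>UNIV. K2 * of_bool ((?x $ i \<in> I i j \<theta>) \<noteq> (?x $ i \<in> I i j \<theta>')))"
      unfolding H_def G_def
    proof (rule norm_diff_add_switched_sum_le)
      show "norm (F \<theta> ?x - F \<theta>' ?x) \<le> p \<omega> * L1 * dist \<theta> \<theta>'"
        using F_lip[of \<theta> ?x \<theta>' ?x] by (simp add: p_def dist_norm mult.assoc add.commute)
      show "norm (gdot j \<theta> ?x - gdot j \<theta>' ?x) \<le> p \<omega> * L3 * dist \<theta> \<theta>'" if "j \<in> {1..N}" for j
        using g_lip[OF that, of \<theta> ?x \<theta>' ?x] by (simp add: p_def dist_norm mult.assoc add.commute)
    qed (use g_bdd in auto)
    with that show ?thesis
      by (simp add: cross_def crossing_def indicator_def algebra_simps)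
  qed
  have weight: "lipschitz_in_mean M (\<lambda>\<theta> \<theta>' \<omega>. (L1 + real N * L3) * p \<omega> * dist \<theta> \<theta>')"
  proof (rule lipschitz_in_mean_weight)
    show "integrable M (\<lambda>\<omega>. (L1 + real N * L3) * p \<omega>)"
      unfolding p_def using rho X0_meas moment
      by (intro integrable_mult_right integrable_powr_one_plus_twice) (auto intro: finite_measure_axioms)
  qed (use L1 L3 in \<open>simp add: p_def\<close>)
  have densities: "\<exists>f. bounded (range f) \<and> distributed M lborel (\<lambda>\<omega>. X0 \<omega> $ i) (\<lambda>t. ennreal (f t))" for i
    using density[of i] by blast
  note switching = lipschitz_in_mean_crossing_sum[of "{1..N}" K2 I, OF finite_atLeastAtMost _ I_adm densities]
  have "lipschitz_in_mean M (\<lambda>\<theta> \<theta>' \<omega>. norm (H \<theta> (X0 \<omega>) - H \<theta>' (X0 \<omega>)))"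
  proof (rule lipschitz_in_mean_mono[OF lipschitz_in_mean_add[OF weight switching(1)]])
    show "(\<lambda>\<omega>. (L1 + real N * L3) * p \<omega> * dist \<theta> \<theta>') \<in> borel_measurable M" for \<theta> \<theta>' :: "real^'d"
      unfolding p_def using X0_meas by measurable
  qed (use K2 switching(2) pointwise in \<open>auto simp: cross_def\<close>)
  then show ?thesis
    by (rule lipschitz_in_mean_imp_norm_bound)
qed

end
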